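(* Let $n\ge 2$, $d\ge 1$, $\tau>0$, $\sigma>0$. Let $\mu^\star_1,\mu^\star_2\stackrel{\mathrm{i.i.d.}}{\sim}\mathcal N(0,\tau^2 I_d)$ and $\xi_1,\dots,\xi_n\stackrel{\mathrm{i.i.d.}}{\sim}\mathcal N(0,\sigma^2 I_d)$, independent, let $z^\star_1,\dots,z^\star_n\in\{1,2\}$ be fixed labels with both classes $S^\star_\ell=\{i:z^\star_i=\ell\}$ nonempty, and $x_i=\mu^\star_{z^\star_i}+\xi_i$. Let $\mathcal P=\{C_1,C_2\}$ be a fixed partition of $[n]$ into two nonempty sets, and suppose there exist $i\in[n]$, $\ell$ with $i\in S^\star_\ell$, and $j$ with $i\in C_j$ ($\overline j$ the other index) such that $0<R^\ell_j\le R^\ell_{\overline j}\le1$. Then $$\mathbb P(\mathcal P\text{ is a fixed point of Hartigan's algorithm})\le\rho^{d/4},$$ with $$\rho=1-\left(\frac{\tau^2\Bigl(\frac{|C_j|}{|C_j|-1}(1-R^\ell_j)^2-\frac{|C_{\overline j}|}{|C_{\overline j}|+1}(1-R^\ell_{\overline j})^2\Bigr)}{\tau^2\Bigl(\frac{|C_j|}{|C_j|-1}(1-R^\ell_j)^2+\frac{|C_{\overline j}|}{|C_{\overline j}|+1}(1-R^\ell_{\overline j})^2\Bigr)+\sigma^2}\right)^2.$$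
   Context: $R^\ell_k=|C_k\cap S^\star_\ell|/|C_k|$. Centroids $\widehat\mu_k=|C_k|^{-1}\sum_{m\in C_k}x_m$. Hartigan weighted distance: $\Delta_H^2(x_i,C_k)=\frac{|C_k|}{|C_k|-1}\|x_i-\widehat\mu_k\|^2$ if $i\in C_k$, and $\frac{|C_k|}{|C_k|+1}\|x_i-\widehat\mu_k\|^2$ if $i\notin C_k$. Hartigan's algorithm considers single-sample moves: a sample $i$ in a cluster $C_k$ with $|C_k|>1$ is moved to the other cluster $C_{k'}$ if $\Delta_H^2(x_i,C_{k'})<\Delta_H^2(x_i,C_k)$. A partition is a fixed point of Hartigan's algorithm if no such move exists, i.e. for every $i$ in a cluster $C_k$ with $|C_k|>1$, $\Delta_H^2(x_i,C_k)\le\Delta_H^2(x_i,C_{k'})$. Randomness is over the centers and noise. *)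

theory Defs
  imports "HOL-Probability.Probability"
begin

(* Samples are indexed by [n] = {1..n}, classes / clusters by {1,2}, coordinates by {..<d}. *)

definition gauss1 :: "real \<Rightarrow> real measure" where
  "gauss1 s = density lborel (normal_density 0 s)"

(* Outcome (m, e): m (l, c) = c-th coordinate of centre mu*_l (l \<in> {1,2});
   e (i, c) = c-th coordinate of noise xi_i (i \<in> {1..n}). All coordinates independent. *)
definition model :: "nat \<Rightarrow> nat \<Rightarrow> real \<Rightarrow> real \<Rightarrow>
    ((nat \<times> nat \<Rightarrow> real) \<times> (nat \<times> nat \<Rightarrow> real)) measure" where
  "model n d \<tau> \<sigma> =
     PiM ({1,2} \<times> {..<d}) (\<lambda>_. gauss1 \<tau>) \<Otimes>\<^sub>M PiM ({1..n} \<times> {..<d}) (\<lambda>_. gauss1 \<sigma>)"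

definition datum :: "(nat \<Rightarrow> nat) \<Rightarrow> (nat \<times> nat \<Rightarrow> real) \<times> (nat \<times> nat \<Rightarrow> real)
    \<Rightarrow> nat \<Rightarrow> nat \<Rightarrow> real" where
  "datum z \<omega> i c = fst \<omega> (z i, c) + snd \<omega> (i, c)"

definition centroid :: "(nat \<Rightarrow> nat \<Rightarrow> real) \<Rightarrow> nat set \<Rightarrow> nat \<Rightarrow> real" where
  "centroid x C c = (\<Sum>m\<in>C. x m c) / real (card C)"

definition sqdist :: "nat \<Rightarrow> (nat \<Rightarrow> real) \<Rightarrow> (nat \<Rightarrow> real) \<Rightarrow> real" where
  "sqdist d u v = (\<Sum>c<d. (u c - v c)\<^sup>2)"

definition hartigan_dist :: "nat \<Rightarrow> (nat \<Rightarrow> nat \<Rightarrow> real) \<Rightarrow> nat \<Rightarrow> nat set \<Rightarrow> real" where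
  "hartigan_dist d x i C =
     (if i \<in> C then real (card C) / (real (card C) - 1)
      else real (card C) / (real (card C) + 1)) * sqdist d (x i) (centroid x C)"

definition other :: "nat \<Rightarrow> nat" where
  "other j = 3 - j"

definition hartigan_fixed_point :: "nat \<Rightarrow> (nat \<Rightarrow> nat \<Rightarrow> real) \<Rightarrow> (nat \<Rightarrow> nat set) \<Rightarrow> bool" where
  "hartigan_fixed_point d x C =
     (\<forall>k\<in>{1,2}. \<forall>i\<in>C k. card (C k) > 1 \<longrightarrow>
        hartigan_dist d x i (C k) \<le> hartigan_dist d x i (C (other k)))"

definition true_class :: "nat \<Rightarrow> (nat \<Rightarrow> nat) \<Rightarrow> nat \<Rightarrow> nat set" where
  "true_class n z l = {i \<in> {1..n}. z i = l}"

definition Rfrac :: "nat \<Rightarrow> (nat \<Rightarrow> nat) \<Rightarrow> (nat \<Rightarrow> nat set) \<Rightarrow> nat \<Rightarrow> nat \<Rightarrow> real" where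
  "Rfrac n z C l k = real (card (C k \<inter> true_class n z l)) / real (card (C k))"

definition rho :: "real \<Rightarrow> real \<Rightarrow> (nat \<Rightarrow> nat set) \<Rightarrow> real \<Rightarrow> real \<Rightarrow> nat \<Rightarrow> real" where
  "rho \<tau> \<sigma> C Rj Rjb j =
     (let a = real (card (C j)) / (real (card (C j)) - 1) * (1 - Rj)\<^sup>2;
          b = real (card (C (other j))) / (real (card (C (other j))) + 1) * (1 - Rjb)\<^sup>2
      in 1 - ((\<tau>\<^sup>2 * (a - b)) / (\<tau>\<^sup>2 * (a + b) + \<sigma>\<^sup>2))\<^sup>2)"

end

theory Submission
  imports Defs
begin

text \<open>If the partition is a fixed point, the sample \<open>i\<close> of the hypothesis may not move from \<open>C\<^sub>j\<close>
  to the other cluster \<open>C'\<close>, i.e. \<open>F \<le> G\<close> for the Hartigan distances \<open>F\<close> from \<open>x\<^sub>i\<close> to \<open>C\<^sub>j\<close> and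
  \<open>G\<close> from \<open>x\<^sub>i\<close> to \<open>C'\<close>. In each coordinate, \<open>x\<^sub>i\<close> minus a centroid is a linear combination of the
  independent Gaussian centre and noise coordinates, so \<open>F\<close> and \<open>G\<close> are \<open>P\<close> and \<open>R\<close> times
  \<open>\<chi>\<^sup>2\<close> variables with \<open>d\<close> degrees of freedom, where \<open>P = 2\<tau>\<^sup>2a + \<sigma>\<^sup>2\<close> and \<open>R = 2\<tau>\<^sup>2b + \<sigma>\<^sup>2\<close>
  for the two terms \<open>a > b\<close> of \<open>\<rho>\<close>.\<close>

context prob_space
begin

lemma nn_integral_exp_square_normal:
  fixes U :: "'a \<Rightarrow> real"
  assumes U: "distributed M lborel U (normal_density 0 s)"
    and s: "s > 0" and \<kappa>: "1 + 2 * \<kappa> * s\<^sup>2 > 0"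
  shows "(\<integral>\<^sup>+\<omega>. ennreal (exp (- \<kappa> * (U \<omega>)\<^sup>2)) \<partial>M) = ennreal (1 / sqrt (1 + 2 * \<kappa> * s\<^sup>2))"
proof -
  define q where "q = sqrt (1 + 2 * \<kappa> * s\<^sup>2)"
  have q: "q > 0" "q\<^sup>2 = 1 + 2 * \<kappa> * s\<^sup>2" using \<kappa> by (auto simp: q_def)
  have s': "s / q > 0" using s q by simp
  have rescale: "ennreal (normal_density 0 s x) * ennreal (exp (- \<kappa> * x\<^sup>2))
      = ennreal (1 / q) * ennreal (normal_density 0 (s / q) x)" for x
  proof -
    have "- x\<^sup>2 / (2 * s\<^sup>2) + - \<kappa> * x\<^sup>2 = - x\<^sup>2 / (2 * (s / q)\<^sup>2)"
      using s q by (simp add: power_divide field_simps)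
    then have "exp (- x\<^sup>2 / (2 * s\<^sup>2)) * exp (- \<kappa> * x\<^sup>2) = exp (- x\<^sup>2 / (2 * (s / q)\<^sup>2))"
      by (simp add: mult_exp_exp)
    moreover have "sqrt (2 * pi * (s / q)\<^sup>2) = sqrt (2 * pi * s\<^sup>2) / q"
      using s q by (simp add: power_divide real_sqrt_divide real_sqrt_mult q_def)
    ultimately have "normal_density 0 s x * exp (- \<kappa> * x\<^sup>2) = 1 / q * normal_density 0 (s / q) x"
      using q by (simp add: normal_density_def field_simps)
    then show ?thesis
      using q by (simp add: ennreal_mult'[symmetric] ennreal_mult''[symmetric])
  qed
  have "(\<integral>\<^sup>+\<omega>. ennreal (exp (- \<kappa> * (U \<omega>)\<^sup>2)) \<partial>M)
      = (\<integral>\<^sup>+x. ennreal (normal_density 0 s x) * ennreal (exp (- \<kappa> * x\<^sup>2)) \<partial>lborel)"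
    by (rule distributed_nn_integral[OF U, symmetric]) simp
  also have "\<dots> = (\<integral>\<^sup>+x. ennreal (1 / q) * ennreal (normal_density 0 (s / q) x) \<partial>lborel)"
    by (intro nn_integral_cong) (rule rescale)
  also have "\<dots> = ennreal (1 / q) * (\<integral>\<^sup>+x. ennreal (normal_density 0 (s / q) x) \<partial>lborel)"
    by (rule nn_integral_cmult) simp
  also have "(\<integral>\<^sup>+x. ennreal (normal_density 0 (s / q) x) \<partial>lborel) = 1"
    using s' by (subst nn_integral_eq_integral) (auto intro: integrable_normal_density)
  finally show ?thesis by (simp add: q_def)
qed

lemma distributed_weighted_sum_normal:
  fixes Y :: "'i \<Rightarrow> 'a \<Rightarrow> real"
  assumes J: "finite J" and indep: "indep_vars (\<lambda>_. borel) Y J"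
    and normal: "\<And>k. k \<in> J \<Longrightarrow> distributed M lborel (Y k) (normal_density 0 (s k))"
    and s: "\<And>k. k \<in> J \<Longrightarrow> s k > 0"
    and nonzero: "\<exists>k\<in>J. w k \<noteq> 0"
  shows "distributed M lborel (\<lambda>\<omega>. \<Sum>k\<in>J. w k * Y k \<omega>)
           (normal_density 0 (sqrt (\<Sum>k\<in>J. (w k * s k)\<^sup>2)))"
proof -
  define J' where "J' = {k\<in>J. w k \<noteq> 0}"
  have J': "finite J'" "J' \<noteq> {}" "J' \<subseteq> J" using J nonzero by (auto simp: J'_def)
  have "distributed M lborel (\<lambda>\<omega>. \<Sum>k\<in>J'. w k * Y k \<omega>)
          (normal_density (\<Sum>k\<in>J'. 0) (sqrt (\<Sum>k\<in>J'. (\<bar>w k\<bar> * s k)\<^sup>2)))"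
  proof (rule sum_indep_normal[OF J'(1,2)])
    show "indep_vars (\<lambda>_. borel) (\<lambda>k \<omega>. w k * Y k \<omega>) J'"
      using indep_vars_subset[OF indep J'(3)] by (rule indep_vars_compose2) simp
    show "distributed M lborel (\<lambda>\<omega>. w k * Y k \<omega>) (normal_density 0 (\<bar>w k\<bar> * s k))" if "k \<in> J'" for k
      using normal_density_affine[OF normal s, of k "w k" 0] that by (auto simp: J'_def)
  qed (use s in \<open>auto simp: J'_def\<close>)
  moreover have "(\<Sum>k\<in>J'. f k) = (\<Sum>k\<in>J. f k)" if "\<And>k. w k = 0 \<Longrightarrow> f k = 0" for f :: "_ \<Rightarrow> real"
    using J that by (intro sum.mono_neutral_left) (auto simp: J'_def)
  ultimately show ?thesis
    by (simp add: power_mult_distrib)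
qed

lemma nn_integral_exp_sum_squares_normal:
  fixes U :: "'i \<Rightarrow> 'a \<Rightarrow> real"
  assumes I: "finite I" and indep: "indep_vars (\<lambda>_. borel) U I"
    and normal: "\<And>c. c \<in> I \<Longrightarrow> distributed M lborel (U c) (normal_density 0 s)"
    and s: "s > 0" and \<kappa>: "1 + 2 * \<kappa> * s\<^sup>2 > 0"
  shows "(\<integral>\<^sup>+\<omega>. ennreal (exp (- \<kappa> * (\<Sum>c\<in>I. (U c \<omega>)\<^sup>2))) \<partial>M)
         = ennreal ((1 / sqrt (1 + 2 * \<kappa> * s\<^sup>2)) ^ card I)"
proof -
  have "(\<integral>\<^sup>+\<omega>. ennreal (exp (- \<kappa> * (\<Sum>c\<in>I. (U c \<omega>)\<^sup>2))) \<partial>M)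
      = (\<integral>\<^sup>+\<omega>. (\<Prod>c\<in>I. ennreal (exp (- \<kappa> * (U c \<omega>)\<^sup>2))) \<partial>M)"
    using I by (simp add: prod_ennreal exp_sum sum_distrib_left)
  also have "\<dots> = (\<Prod>c\<in>I. \<integral>\<^sup>+\<omega>. ennreal (exp (- \<kappa> * (U c \<omega>)\<^sup>2)) \<partial>M)"
    using indep_vars_compose2[OF indep, of "\<lambda>_ x. ennreal (exp (- \<kappa> * x\<^sup>2))" "\<lambda>_. borel"]
    by (intro indep_vars_nn_integral I) auto
  also have "\<dots> = (\<Prod>c\<in>I. ennreal (1 / sqrt (1 + 2 * \<kappa> * s\<^sup>2)))"
    using nn_integral_exp_square_normal[OF normal s \<kappa>] by simp
  finally show ?thesis
    using \<kappa> by (simp add: ennreal_power)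
qed

lemma indep_vars_sum_blocks:
  fixes Y :: "'i \<Rightarrow> 'a \<Rightarrow> real" and w :: "'c \<Rightarrow> 'i \<Rightarrow> real"
  assumes indep: "indep_vars (\<lambda>_. borel) Y I"
    and K: "\<And>c. c \<in> L \<Longrightarrow> K c \<subseteq> I" and disj: "disjoint_family_on K L"
  shows "indep_vars (\<lambda>_. borel) (\<lambda>c \<omega>. \<Sum>k\<in>K c. w c k * Y k \<omega>) L"
proof -
  have "indep_vars (\<lambda>_. borel) (\<lambda>c \<omega>. \<Sum>k\<in>K c. w c k * restrict (\<lambda>k. Y k \<omega>) (K c) k) L"
    by (rule indep_vars_compose2[OF indep_vars_restrict[OF indep K disj]]) measurable
  then show ?thesis
    by (rule indep_vars_cong[THEN iffD1, rotated 3]) auto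
qed

lemma prob_le_sqrt_exp_moments:
  assumes F: "F \<in> borel_measurable M" and G: "G \<in> borel_measurable M" and t: "t \<ge> 0"
    and A: "(\<integral>\<^sup>+\<omega>. ennreal (exp (- t * F \<omega>)) \<partial>M) = ennreal A" and "A > 0"
    and B: "(\<integral>\<^sup>+\<omega>. ennreal (exp (t * G \<omega>)) \<partial>M) = ennreal B" and "B > 0"
  shows "prob {\<omega> \<in> space M. F \<omega> \<le> G \<omega>} \<le> sqrt (A * B)"
proof -
  define \<Lambda> where "\<Lambda> = sqrt (B / A)"
  have \<Lambda>: "\<Lambda> > 0" "\<Lambda> * A = sqrt (A * B)" "B / \<Lambda> = sqrt (A * B)"
    using \<open>A > 0\<close> \<open>B > 0\<close> by (auto simp: \<Lambda>_def real_sqrt_divide real_sqrt_mult field_simps)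
  define S where "S = {\<omega> \<in> space M. F \<omega> \<le> G \<omega>}"
  have S: "S \<in> sets M" unfolding S_def using F G by measurable
  \<comment> \<open>AM-GM, since \<open>e\<^sup>-\<^sup>t\<^sup>F e\<^sup>t\<^sup>G \<ge> 1\<close> on \<open>S\<close>\<close>
  have "indicator S \<omega> \<le> ennreal (\<Lambda> / 2) * ennreal (exp (- t * F \<omega>))
                            + ennreal (1 / (2 * \<Lambda>)) * ennreal (exp (t * G \<omega>))" for \<omega>
  proof (cases "\<omega> \<in> S")
    case True
    have "1 \<le> exp (- t * F \<omega>) * exp (t * G \<omega>)"
      using True t by (simp add: S_def mult_left_mono flip: exp_add)
    then have "1 \<le> sqrt ((\<Lambda> * exp (- t * F \<omega>)) * (exp (t * G \<omega>) / \<Lambda>))"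
      using \<Lambda> by simp
    also have "\<dots> \<le> (\<Lambda> * exp (- t * F \<omega>) + exp (t * G \<omega>) / \<Lambda>) / 2"
      using \<Lambda> by (intro arith_geo_mean_sqrt) auto
    finally show ?thesis
      using True \<Lambda> by (simp add: ennreal_mult'[symmetric] field_simps flip: ennreal_plus)
  qed simp
  then have "emeasure M S \<le> (\<integral>\<^sup>+\<omega>. ennreal (\<Lambda> / 2) * ennreal (exp (- t * F \<omega>))
                            + ennreal (1 / (2 * \<Lambda>)) * ennreal (exp (t * G \<omega>)) \<partial>M)"
    using S by (simp flip: nn_integral_indicator) (intro nn_integral_mono)
  also have "\<dots> = ennreal (\<Lambda> / 2) * (\<integral>\<^sup>+\<omega>. ennreal (exp (- t * F \<omega>)) \<partial>M)
                 + ennreal (1 / (2 * \<Lambda>)) * (\<integral>\<^sup>+\<omega>. ennreal (exp (t * G \<omega>)) \<partial>M)"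
    using F G by (simp add: nn_integral_add nn_integral_cmult)
  also have "\<dots> = ennreal (sqrt (A * B))"
    unfolding A B using \<Lambda> \<open>A > 0\<close> \<open>B > 0\<close> by (simp add: ennreal_mult'[symmetric] flip: ennreal_plus)
  finally show ?thesis
    using S \<open>A > 0\<close> \<open>B > 0\<close> by (simp add: S_def emeasure_eq_measure)
qed

lemma prob_le_of_scaled_chi_square_laplace:
  fixes F G :: "'a \<Rightarrow> real" and P R :: real and d :: nat
  assumes F: "F \<in> borel_measurable M" and G: "G \<in> borel_measurable M"
    and RP: "0 < R" "R < P"
    and laplace_F: "\<And>\<kappa>. 1 + 2 * \<kappa> * P > 0 \<Longrightarrow>
      (\<integral>\<^sup>+\<omega>. ennreal (exp (- \<kappa> * F \<omega>)) \<partial>M) = ennreal ((1 / sqrt (1 + 2 * \<kappa> * P)) ^ d)"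
    and laplace_G: "\<And>\<kappa>. 1 + 2 * \<kappa> * R > 0 \<Longrightarrow>
      (\<integral>\<^sup>+\<omega>. ennreal (exp (- \<kappa> * G \<omega>)) \<partial>M) = ennreal ((1 / sqrt (1 + 2 * \<kappa> * R)) ^ d)"
  shows "prob {\<omega> \<in> space M. F \<omega> \<le> G \<omega>} \<le> (1 - ((P - R) / (P + R))\<^sup>2) powr (real d / 4)"
proof -
  define t where "t = (P - R) / (4 * P * R)"
  define u where "u = 1 + 2 * t * P"
  define v where "v = 1 + 2 * (- t) * R"
  have t: "t \<ge> 0" using RP by (simp add: t_def)
  have u: "u = (P + R) / (2 * R)" and v: "v = (P + R) / (2 * P)"
    using RP by (simp_all add: u_def v_def t_def field_simps)
  have uv: "u > 0" "v > 0" using RP by (simp_all add: u v)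
  have "prob {\<omega> \<in> space M. F \<omega> \<le> G \<omega>} \<le> sqrt ((1 / sqrt u) ^ d * (1 / sqrt v) ^ d)"
  proof (rule prob_le_sqrt_exp_moments[OF F G t])
    show "(\<integral>\<^sup>+\<omega>. ennreal (exp (- t * F \<omega>)) \<partial>M) = ennreal ((1 / sqrt u) ^ d)"
      using laplace_F[of t] uv by (simp add: u_def)
    show "(\<integral>\<^sup>+\<omega>. ennreal (exp (t * G \<omega>)) \<partial>M) = ennreal ((1 / sqrt v) ^ d)"
      using laplace_G[of "- t"] uv by (simp add: v_def)
  qed (use uv in auto)
  also have "(1 / sqrt u) ^ d * (1 / sqrt v) ^ d = (sqrt (1 / (u * v))) ^ d"
    by (simp add: real_sqrt_divide real_sqrt_mult power_mult_distrib[symmetric])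
  also have "\<dots> = (1 / (u * v)) powr (real d / 2)"
    using uv by (simp add: powr_half_sqrt[symmetric] powr_realpow[symmetric] powr_powr)
  also have "sqrt \<dots> = (1 / (u * v)) powr (real d / 4)"
    using uv by (simp add: powr_half_sqrt[symmetric] powr_powr)
  also have "1 / (u * v) = 1 - ((P - R) / (P + R))\<^sup>2"
  proof -
    have "P + R \<noteq> 0" using RP by simp
    then show ?thesis
      using RP by (simp add: u v power_divide divide_simps) algebra
  qed
  finally show ?thesis .
qed

end

text \<open>The sample space of the model is a pair of families (centres, noise); \<open>plus_coord\<close> reads it as
  one family indexed by the disjoint sum, so that independence of all coordinates is a single
  \<open>indep_vars\<close>.\<close>

definition plus_coord :: "'a + 'b \<Rightarrow> ('a \<Rightarrow> 'c) \<times> ('b \<Rightarrow> 'c) \<Rightarrow> 'c" where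
  "plus_coord k \<omega> = case_sum (fst \<omega>) (snd \<omega>) k"

lemma measurable_plus_coord:
  assumes "k \<in> A <+> B"
  shows "plus_coord k \<in> measurable (Pi\<^sub>M A M \<Otimes>\<^sub>M Pi\<^sub>M B N) (case_sum M N k)"
  using assms unfolding plus_coord_def by auto

lemma distr_plus_coord_PiM:
  assumes A: "finite A" and B: "finite B"
    and M: "\<And>a. prob_space (M a)" and N: "\<And>b. prob_space (N b)"
  shows "distr (Pi\<^sub>M A M \<Otimes>\<^sub>M Pi\<^sub>M B N) (Pi\<^sub>M (A <+> B) (case_sum M N)) (\<lambda>\<omega>. \<lambda>k\<in>A <+> B. plus_coord k \<omega>)
         = Pi\<^sub>M (A <+> B) (case_sum M N)"
proof -
  interpret MN: product_sigma_finite "case_sum M N"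
    by (simp add: product_sigma_finite_def M N prob_space_imp_sigma_finite split: sum.split)
  interpret PM: product_sigma_finite M
    by (simp add: product_sigma_finite_def M prob_space_imp_sigma_finite)
  interpret PN: product_sigma_finite N
    by (simp add: product_sigma_finite_def N prob_space_imp_sigma_finite)
  interpret PB: sigma_finite_measure "Pi\<^sub>M B N"
    by (intro prob_space_imp_sigma_finite prob_space_PiM N)
  show ?thesis
  proof (rule MN.PiM_eqI)
    fix X assume X: "\<And>k. k \<in> A <+> B \<Longrightarrow> X k \<in> sets (case_sum M N k)"
    have "(\<lambda>\<omega>. \<lambda>k\<in>A <+> B. plus_coord k \<omega>) -` Pi\<^sub>E (A <+> B) X \<inter> space (Pi\<^sub>M A M \<Otimes>\<^sub>M Pi\<^sub>M B N)
        = (\<Pi>\<^sub>E a\<in>A. X (Inl a)) \<times> (\<Pi>\<^sub>E b\<in>B. X (Inr b))"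
      using X[THEN sets.sets_into_space]
      by (auto simp: plus_coord_def space_pair_measure space_PiM PiE_iff extensional_def; force)
    moreover have "(\<lambda>\<omega>. \<lambda>k\<in>A <+> B. plus_coord k \<omega>)
        \<in> measurable (Pi\<^sub>M A M \<Otimes>\<^sub>M Pi\<^sub>M B N) (Pi\<^sub>M (A <+> B) (case_sum M N))"
      by (intro measurable_restrict measurable_plus_coord)
    moreover have "\<And>a. a \<in> A \<Longrightarrow> X (Inl a) \<in> sets (M a)" "\<And>b. b \<in> B \<Longrightarrow> X (Inr b) \<in> sets (N b)"
      using X by force+
    ultimately show "emeasure (distr (Pi\<^sub>M A M \<Otimes>\<^sub>M Pi\<^sub>M B N) (Pi\<^sub>M (A <+> B) (case_sum M N))
                       (\<lambda>\<omega>. \<lambda>k\<in>A <+> B. plus_coord k \<omega>)) (Pi\<^sub>E (A <+> B) X)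
                   = (\<Prod>k\<in>A <+> B. emeasure (case_sum M N k) (X k))"
      using A B X
      by (simp add: emeasure_distr sets_PiM_I_finite PB.emeasure_pair_measure_Times PM.emeasure_PiM
                    PN.emeasure_PiM prod.Plus comp_def)
  qed (use A B in auto)
qed

lemma distr_plus_coord:
  assumes A: "finite A" and B: "finite B"
    and M: "\<And>a. prob_space (M a)" and N: "\<And>b. prob_space (N b)"
    and k: "k \<in> A <+> B"
  shows "distr (Pi\<^sub>M A M \<Otimes>\<^sub>M Pi\<^sub>M B N) (case_sum M N k) (plus_coord k) = case_sum M N k"
proof -
  let ?\<Psi> = "\<lambda>\<omega>. \<lambda>k\<in>A <+> B. plus_coord k \<omega>"
  have "distr (Pi\<^sub>M A M \<Otimes>\<^sub>M Pi\<^sub>M B N) (case_sum M N k) (plus_coord k)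
      = distr (Pi\<^sub>M A M \<Otimes>\<^sub>M Pi\<^sub>M B N) (case_sum M N k) ((\<lambda>y. y k) \<circ> ?\<Psi>)"
    using k by (intro distr_cong) auto
  also have "\<dots> = distr (distr (Pi\<^sub>M A M \<Otimes>\<^sub>M Pi\<^sub>M B N) (Pi\<^sub>M (A <+> B) (case_sum M N)) ?\<Psi>)
                    (case_sum M N k) (\<lambda>y. y k)"
    using k by (intro distr_distr[symmetric] measurable_restrict measurable_plus_coord) auto
  also have "\<dots> = case_sum M N k"
    using k M N by (simp add: distr_plus_coord_PiM[OF A B M N] distr_PiM_component split: sum.split)
  finally show ?thesis .
qed

lemma prob_space_gauss1: "s > 0 \<Longrightarrow> prob_space (gauss1 s)"
  unfolding gauss1_def by (rule prob_space_normal_density)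

lemma prob_space_model: "\<tau> > 0 \<Longrightarrow> \<sigma> > 0 \<Longrightarrow> prob_space (model n d \<tau> \<sigma>)"
  unfolding model_def by (intro prob_space_pair prob_space_PiM prob_space_gauss1)

lemma measurable_model_coord:
  assumes "k \<in> ({1,2} \<times> {..<d}) <+> ({1..n} \<times> {..<d})"
  shows "plus_coord k \<in> borel_measurable (model n d \<tau> \<sigma>)"
  using measurable_plus_coord[OF assms, of "\<lambda>_. gauss1 \<tau>" "\<lambda>_. gauss1 \<sigma>"]
  by (simp add: model_def gauss1_def split: sum.split_asm)

lemma distributed_model_coord:
  assumes "\<tau> > 0" "\<sigma> > 0" and k: "k \<in> ({1,2} \<times> {..<d}) <+> ({1..n} \<times> {..<d})"
  shows "distributed (model n d \<tau> \<sigma>) lborel (plus_coord k) (normal_density 0 (case_sum (\<lambda>_. \<tau>) (\<lambda>_. \<sigma>) k))"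
proof -
  have "distr (model n d \<tau> \<sigma>) lborel (plus_coord k)
      = distr (model n d \<tau> \<sigma>) (case_sum (\<lambda>_. gauss1 \<tau>) (\<lambda>_. gauss1 \<sigma>) k) (plus_coord k)"
    by (intro distr_cong) (auto simp: gauss1_def split: sum.split)
  also have "\<dots> = density lborel (normal_density 0 (case_sum (\<lambda>_. \<tau>) (\<lambda>_. \<sigma>) k))"
    unfolding model_def using assms
    by (subst distr_plus_coord) (auto simp: prob_space_normal_density gauss1_def split: sum.split)
  finally show ?thesis
    using measurable_model_coord[OF k] by (simp add: distributed_def)
qed

lemma indep_vars_model_coord:
  assumes "\<tau> > 0" "\<sigma> > 0"
  shows "prob_space.indep_vars (model n d \<tau> \<sigma>) (\<lambda>_. borel) plus_coord
           (({1,2} \<times> {..<d}) <+> ({1..n} \<times> {..<d}))"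
proof -
  let ?I = "({1,2::nat} \<times> {..<d}) <+> ({1..n} \<times> {..<d})"
  let ?G = "case_sum (\<lambda>_. gauss1 \<tau>) (\<lambda>_. gauss1 \<sigma>) :: _ \<Rightarrow> real measure"
  interpret prob_space "model n d \<tau> \<sigma>" using assms by (rule prob_space_model)
  show ?thesis
  proof (cases "?I = {}")
    case True
    show ?thesis
      unfolding True by (simp add: indep_vars_def2 indep_sets_def)
  next
    case False
    have "distr (model n d \<tau> \<sigma>) (Pi\<^sub>M ?I (\<lambda>_. borel)) (\<lambda>\<omega>. \<lambda>k\<in>?I. plus_coord k \<omega>)
        = distr (model n d \<tau> \<sigma>) (Pi\<^sub>M ?I ?G) (\<lambda>\<omega>. \<lambda>k\<in>?I. plus_coord k \<omega>)"
      by (intro distr_cong sets_PiM_cong) (auto simp: gauss1_def split: sum.split)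
    also have "\<dots> = Pi\<^sub>M ?I ?G"
      unfolding model_def using assms
      by (intro distr_plus_coord_PiM) (auto simp: prob_space_gauss1)
    also have "\<dots> = Pi\<^sub>M ?I (\<lambda>k. distr (model n d \<tau> \<sigma>) borel (plus_coord k))"
    proof (rule PiM_cong)
      fix k assume k: "k \<in> ?I"
      have "distr (model n d \<tau> \<sigma>) borel (plus_coord k) = distr (model n d \<tau> \<sigma>) (?G k) (plus_coord k)"
        by (intro distr_cong) (auto simp: gauss1_def split: sum.split)
      then show "?G k = distr (model n d \<tau> \<sigma>) borel (plus_coord k)"
        unfolding model_def using assms k
        by (simp add: distr_plus_coord prob_space_gauss1)
    qed simp
    finally show ?thesis
      using False by (subst indep_vars_iff_distr_eq_PiM') (auto intro: measurable_model_coord)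
  qed
qed

definition coord_block :: "nat \<Rightarrow> nat \<Rightarrow> (nat \<times> nat + nat \<times> nat) set" where
  "coord_block n c = ({1,2} \<times> {c}) <+> ({1..n} \<times> {c})"

definition residual_coeff :: "(nat \<Rightarrow> nat) \<Rightarrow> nat \<Rightarrow> nat set \<Rightarrow> nat \<times> nat + nat \<times> nat \<Rightarrow> real" where
  "residual_coeff z i D k = (case k of
      Inl (l, _) \<Rightarrow> of_bool (z i = l) - real (card {m \<in> D. z m = l}) / real (card D)
    | Inr (m, _) \<Rightarrow> of_bool (m = i) - of_bool (m \<in> D) / real (card D))"

lemma sum_coord_block:
  "(\<Sum>k\<in>coord_block n c. f k) = (\<Sum>l\<in>{1,2}. f (Inl (l, c))) + (\<Sum>m\<in>{1..n}. f (Inr (m, c)))"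
  by (simp add: coord_block_def sum.Plus sum.cartesian_product')

lemma coord_block_subset: "c < d \<Longrightarrow> coord_block n c \<subseteq> ({1,2} \<times> {..<d}) <+> ({1..n} \<times> {..<d})"
  by (auto simp: coord_block_def)

lemma sum_of_bool_mem:
  fixes g :: "'a \<Rightarrow> real"
  assumes "finite A" "D \<subseteq> A"
  shows "(\<Sum>m\<in>A. of_bool (m \<in> D) * g m) = (\<Sum>m\<in>D. g m)"
proof -
  have "(\<Sum>m\<in>A. of_bool (m \<in> D) * g m) = (\<Sum>m\<in>A. if m \<in> D then g m else 0)"
    by (intro sum.cong) auto
  also have "\<dots> = (\<Sum>m\<in>D. g m)"
    using assms by (simp add: sum.inter_restrict[symmetric] Int_absorb1)
  finally show ?thesis .
qed

lemma datum_minus_centroid: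
  assumes D: "D \<subseteq> {1..n}" and i: "i \<in> {1..n}" and z: "\<forall>m\<in>{1..n}. z m \<in> {1,2}"
  shows "datum z \<omega> i c - centroid (datum z \<omega>) D c
         = (\<Sum>k\<in>coord_block n c. residual_coeff z i D k * plus_coord k \<omega>)"
proof -
  have fin: "finite D" using D finite_subset by blast
  define r where "r = real (card D)"
  have "(\<Sum>m\<in>D. fst \<omega> (z m, c)) = (\<Sum>l\<in>{1,2}. \<Sum>m\<in>{m \<in> D. z m = l}. fst \<omega> (z m, c))"
    using fin D z by (intro sum.group[symmetric]) auto
  also have "\<dots> = (\<Sum>l\<in>{1,2}. real (card {m \<in> D. z m = l}) * fst \<omega> (l, c))"
    by (intro sum.cong refl) simp
  finally have centres: "(\<Sum>l\<in>{1,2}. residual_coeff z i D (Inl (l, c)) * plus_coord (Inl (l, c)) \<omega>)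
      = fst \<omega> (z i, c) - (\<Sum>m\<in>D. fst \<omega> (z m, c)) / r"
    using z i by (auto simp: residual_coeff_def plus_coord_def r_def algebra_simps add_divide_distrib)
  have "(\<Sum>m\<in>{1..n}. of_bool (m \<in> D) * (snd \<omega> (m, c) / r)) = (\<Sum>m\<in>D. snd \<omega> (m, c)) / r"
    using D sum_of_bool_mem[of "{1..n}" D "\<lambda>m. snd \<omega> (m, c) / r"] by (simp add: sum_divide_distrib)
  then have noise: "(\<Sum>m\<in>{1..n}. residual_coeff z i D (Inr (m, c)) * plus_coord (Inr (m, c)) \<omega>)
      = snd \<omega> (i, c) - (\<Sum>m\<in>D. snd \<omega> (m, c)) / r"
    using i by (simp add: residual_coeff_def plus_coord_def r_def left_diff_distrib sum_subtractf)
  show ?thesis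
    unfolding sum_coord_block centres noise
    by (simp add: datum_def centroid_def r_def sum.distrib add_divide_distrib)
qed

definition residual_variance :: "real \<Rightarrow> real \<Rightarrow> nat \<Rightarrow> (nat \<Rightarrow> nat) \<Rightarrow> nat \<Rightarrow> nat set \<Rightarrow> real" where
  "residual_variance \<tau> \<sigma> n z i D =
     2 * \<tau>\<^sup>2 * (1 - real (card (D \<inter> true_class n z (z i))) / real (card D))\<^sup>2
     + \<sigma>\<^sup>2 * (if i \<in> D then 1 - 1 / real (card D) else 1 + 1 / real (card D))"

lemma card_two_classes:
  assumes "finite D" "\<forall>m\<in>D. z m \<in> {l, l'}" "l \<noteq> l'"
  shows "card {m \<in> D. z m = l} + card {m \<in> D. z m = l'} = card D"
proof -
  have "{m \<in> D. z m = l} \<union> {m \<in> D. z m = l'} = D"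
    using assms(2) by blast
  moreover have "card ({m \<in> D. z m = l} \<union> {m \<in> D. z m = l'}) = card {m \<in> D. z m = l} + card {m \<in> D. z m = l'}"
    using assms(1,3) by (intro card_Un_disjoint) auto
  ultimately show ?thesis
    by simp
qed

lemma sum_sq_residual_coeff_centres:
  assumes D: "D \<subseteq> {1..n}" "D \<noteq> {}" and i: "i \<in> {1..n}" and z: "\<forall>m\<in>{1..n}. z m \<in> {1,2}"
  shows "(\<Sum>l\<in>{1,2}. (residual_coeff z i D (Inl (l, c)))\<^sup>2)
         = 2 * (1 - real (card (D \<inter> true_class n z (z i))) / real (card D))\<^sup>2"
proof -
  define R where "R = real (card (D \<inter> true_class n z (z i))) / real (card D)"
  have fin: "finite D" using D finite_subset by blast
  have "{m \<in> D. z m = z i} = D \<inter> true_class n z (z i)"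
    using D by (auto simp: true_class_def)
  then have R: "real (card {m \<in> D. z m = z i}) / card D = R"
    by (simp add: R_def)
  have "real (card {m \<in> D. z m = l}) / card D = 1 - R" if l: "l \<in> {1,2}" "l \<noteq> z i" for l
  proof -
    have "z m \<in> {l, z i}" if "m \<in> D" for m
    proof -
      have "z m \<in> {1,2}" "z i \<in> {1,2}"
        using z D i that by blast+
      then show ?thesis
        using l by auto
    qed
    then have "card {m \<in> D. z m = l} + card {m \<in> D. z m = z i} = card D"
      using fin l by (intro card_two_classes) auto
    then show ?thesis
      using R fin D by (auto simp: field_simps)
  qed
  then show ?thesis
    using z i R by (auto simp: residual_coeff_def R_def power2_commute)
qed

lemma sum_sq_residual_coeff_noise:
  assumes D: "D \<subseteq> {1..n}" "D \<noteq> {}" and i: "i \<in> {1..n}"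
  shows "(\<Sum>m\<in>{1..n}. (residual_coeff z i D (Inr (m, c)))\<^sup>2)
         = (if i \<in> D then 1 - 1 / real (card D) else 1 + 1 / real (card D))"
proof -
  define r where "r = real (card D)"
  have r: "r > 0" using D finite_subset by (fastforce simp: r_def card_gt_0_iff)
  have "(residual_coeff z i D (Inr (m, c)))\<^sup>2
      = of_bool (m = i) * (1 - 2 * of_bool (i \<in> D) / r) + of_bool (m \<in> D) * (1 / r\<^sup>2)" for m
    by (auto simp: residual_coeff_def r_def power2_diff power_divide)
  then have "(\<Sum>m\<in>{1..n}. (residual_coeff z i D (Inr (m, c)))\<^sup>2)
      = (1 - 2 * of_bool (i \<in> D) / r) + (\<Sum>m\<in>D. 1 / r\<^sup>2)"
    using i D sum_of_bool_mem[of "{1..n}" D "\<lambda>_. 1 / r\<^sup>2"] by (simp add: sum.distrib)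
  also have "\<dots> = (if i \<in> D then 1 - 1 / r else 1 + 1 / r)"
    using r by (cases "i \<in> D") (simp_all add: r_def power2_eq_square divide_simps)
  finally show ?thesis
    by (simp add: r_def)
qed

lemma sum_residual_coeff_sq:
  assumes "D \<subseteq> {1..n}" "D \<noteq> {}" "i \<in> {1..n}" "\<forall>m\<in>{1..n}. z m \<in> {1,2}"
  shows "(\<Sum>k\<in>coord_block n c. (residual_coeff z i D k * case_sum (\<lambda>_. \<tau>) (\<lambda>_. \<sigma>) k)\<^sup>2)
         = residual_variance \<tau> \<sigma> n z i D"
  using sum_sq_residual_coeff_centres[OF assms, of c] sum_sq_residual_coeff_noise[OF assms(1-3), of z c]
  by (simp add: sum_coord_block residual_variance_def power_mult_distrib
           flip: sum_distrib_left sum_distrib_right)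

lemma residual_variance_pos:
  assumes "\<sigma> \<noteq> 0" and "i \<in> D \<Longrightarrow> card D \<ge> 2"
  shows "residual_variance \<tau> \<sigma> n z i D > 0"
proof -
  have "(if i \<in> D then 1 - 1 / real (card D) else 1 + 1 / real (card D)) > 0"
    using assms(2) by (auto simp: field_simps intro: add_pos_nonneg)
  then show ?thesis
    using assms(1) unfolding residual_variance_def by (intro add_nonneg_pos) auto
qed

definition hartigan_weight :: "nat \<Rightarrow> nat set \<Rightarrow> real" where
  "hartigan_weight i C =
     (if i \<in> C then real (card C) / (real (card C) - 1) else real (card C) / (real (card C) + 1))"

lemma hartigan_weight_nonneg: "hartigan_weight i C \<ge> 0"
  by (cases "card C") (auto simp: hartigan_weight_def)

lemma hartigan_dist_eq: "hartigan_dist d x i C = hartigan_weight i C * sqdist d (x i) (centroid x C)"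
  by (simp add: hartigan_dist_def hartigan_weight_def)

lemma hartigan_dist_datum_eq:
  assumes "D \<subseteq> {1..n}" "i \<in> {1..n}" "\<forall>m\<in>{1..n}. z m \<in> {1,2}"
  shows "hartigan_dist d (datum z \<omega>) i D
         = hartigan_weight i D * (\<Sum>c<d. (\<Sum>k\<in>coord_block n c. residual_coeff z i D k * plus_coord k \<omega>)\<^sup>2)"
  by (simp add: hartigan_dist_eq sqdist_def datum_minus_centroid[OF assms])

lemma measurable_hartigan_dist:
  assumes "D \<subseteq> {1..n}" "i \<in> {1..n}" "\<forall>m\<in>{1..n}. z m \<in> {1,2}"
  shows "(\<lambda>\<omega>. hartigan_dist d (datum z \<omega>) i D) \<in> borel_measurable (model n d \<tau> \<sigma>)"
  unfolding hartigan_dist_datum_eq[OF assms]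
  using coord_block_subset by (intro borel_measurable_times borel_measurable_const borel_measurable_sum
      borel_measurable_power measurable_model_coord) auto

text \<open>The Hartigan distance from \<open>x\<^sub>i\<close> to \<open>C\<close> is \<open>hartigan_scale\<close> times a \<open>\<chi>\<^sup>2\<close> variable with \<open>d\<close>
  degrees of freedom: the weight of the Hartigan distance exactly cancels the noise part of the
  residual variance.\<close>

definition hartigan_scale :: "real \<Rightarrow> real \<Rightarrow> nat \<Rightarrow> (nat \<Rightarrow> nat) \<Rightarrow> nat \<Rightarrow> nat set \<Rightarrow> real" where
  "hartigan_scale \<tau> \<sigma> n z i C =
     2 * \<tau>\<^sup>2 * hartigan_weight i C * (1 - real (card (C \<inter> true_class n z (z i))) / real (card C))\<^sup>2
     + \<sigma>\<^sup>2"

lemma hartigan_scale_pos: "\<sigma> \<noteq> 0 \<Longrightarrow> hartigan_scale \<tau> \<sigma> n z i C > 0"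
  unfolding hartigan_scale_def using hartigan_weight_nonneg[of i C]
  by (intro add_nonneg_pos) auto

lemma hartigan_weight_mult_residual_variance:
  assumes "finite D" "D \<noteq> {}" and "i \<in> D \<Longrightarrow> card D \<ge> 2"
  shows "hartigan_weight i D * residual_variance \<tau> \<sigma> n z i D = hartigan_scale \<tau> \<sigma> n z i D"
proof -
  define r where "r = real (card D)"
  have r: "r \<ge> 1" "i \<in> D \<Longrightarrow> r \<ge> 2"
    using assms by (auto simp: r_def Suc_le_eq card_gt_0_iff)
  have "hartigan_weight i D * (if i \<in> D then 1 - 1 / r else 1 + 1 / r) = 1"
  proof (cases "i \<in> D")
    case True
    then have "r - 1 \<noteq> 0" "r \<noteq> 0" using r by auto
    then show ?thesis using True by (simp add: hartigan_weight_def r_def[symmetric] field_simps)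
  next
    case False
    have "r \<noteq> 0" "r + 1 \<noteq> 0" "r * (r + 1) \<noteq> 0" using r by auto
    then show ?thesis using False by (simp add: hartigan_weight_def r_def[symmetric] field_simps)
  qed
  moreover have "hartigan_weight i D * residual_variance \<tau> \<sigma> n z i D
      = 2 * \<tau>\<^sup>2 * hartigan_weight i D * (1 - real (card (D \<inter> true_class n z (z i))) / r)\<^sup>2
        + \<sigma>\<^sup>2 * (hartigan_weight i D * (if i \<in> D then 1 - 1 / r else 1 + 1 / r))"
    by (simp add: residual_variance_def r_def algebra_simps)
  ultimately show ?thesis
    by (simp add: hartigan_scale_def r_def)
qed

lemma distributed_model_residual:
  assumes \<tau>: "\<tau> > 0" and \<sigma>: "\<sigma> > 0"
    and D: "D \<subseteq> {1..n}" "D \<noteq> {}" and i: "i \<in> {1..n}" and z: "\<forall>m\<in>{1..n}. z m \<in> {1,2}"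
    and not_singleton: "i \<in> D \<Longrightarrow> card D \<ge> 2" and c: "c < d"
  shows "distributed (model n d \<tau> \<sigma>) lborel
           (\<lambda>\<omega>. \<Sum>k\<in>coord_block n c. residual_coeff z i D k * plus_coord k \<omega>)
           (normal_density 0 (sqrt (residual_variance \<tau> \<sigma> n z i D)))"
proof -
  interpret prob_space "model n d \<tau> \<sigma>" using \<tau> \<sigma> by (rule prob_space_model)
  have "residual_coeff z i D (Inr (i, c)) \<noteq> 0"
    using not_singleton by (auto simp: residual_coeff_def)
  moreover have "Inr (i, c) \<in> coord_block n c"
    unfolding coord_block_def using i by (intro InrI) auto
  ultimately show ?thesis
    unfolding sum_residual_coeff_sq[OF D i z, of \<tau> \<sigma> c, symmetric] using coord_block_subset[OF c] \<tau> \<sigma>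
    by (intro distributed_weighted_sum_normal indep_vars_subset[OF indep_vars_model_coord] distributed_model_coord)
       (auto simp: coord_block_def split: sum.split)
qed

lemma nn_integral_exp_hartigan_dist:
  assumes \<tau>: "\<tau> > 0" and \<sigma>: "\<sigma> > 0"
    and D: "D \<subseteq> {1..n}" "D \<noteq> {}" and i: "i \<in> {1..n}" and z: "\<forall>m\<in>{1..n}. z m \<in> {1,2}"
    and not_singleton: "i \<in> D \<Longrightarrow> card D \<ge> 2"
    and \<kappa>: "1 + 2 * \<kappa> * hartigan_scale \<tau> \<sigma> n z i D > 0"
  shows "(\<integral>\<^sup>+\<omega>. ennreal (exp (- \<kappa> * hartigan_dist d (datum z \<omega>) i D)) \<partial>model n d \<tau> \<sigma>)
         = ennreal ((1 / sqrt (1 + 2 * \<kappa> * hartigan_scale \<tau> \<sigma> n z i D)) ^ d)"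
proof -
  interpret prob_space "model n d \<tau> \<sigma>" using \<tau> \<sigma> by (rule prob_space_model)
  define U where "U c \<omega> = (\<Sum>k\<in>coord_block n c. residual_coeff z i D k * plus_coord k \<omega>)" for c \<omega>
  have indep: "indep_vars (\<lambda>_. borel) U {..<d}"
    unfolding U_def using indep_vars_model_coord[OF \<tau> \<sigma>] coord_block_subset
    by (rule indep_vars_sum_blocks) (auto simp: coord_block_def disjoint_family_on_def)
  have normal: "distributed (model n d \<tau> \<sigma>) lborel (U c)
      (normal_density 0 (sqrt (residual_variance \<tau> \<sigma> n z i D)))" if "c < d" for c
    unfolding U_def using distributed_model_residual[OF \<tau> \<sigma> D i z not_singleton that] .
  have var: "residual_variance \<tau> \<sigma> n z i D > 0"
    using \<sigma> not_singleton by (intro residual_variance_pos) auto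
  have "finite D"
    using D(1) finite_subset by blast
  then have scale: "hartigan_weight i D * (sqrt (residual_variance \<tau> \<sigma> n z i D))\<^sup>2
      = hartigan_scale \<tau> \<sigma> n z i D"
    using var hartigan_weight_mult_residual_variance[OF _ D(2) not_singleton] by simp
  have "(\<integral>\<^sup>+\<omega>. ennreal (exp (- (\<kappa> * hartigan_weight i D) * (\<Sum>c<d. (U c \<omega>)\<^sup>2))) \<partial>model n d \<tau> \<sigma>)
      = ennreal ((1 / sqrt (1 + 2 * (\<kappa> * hartigan_weight i D) * (sqrt (residual_variance \<tau> \<sigma> n z i D))\<^sup>2))
                 ^ card {..<d})"
    using var \<kappa> scale by (intro nn_integral_exp_sum_squares_normal[OF _ indep normal]) (simp_all add: mult.assoc)
  then show ?thesis
    using scale by (simp add: hartigan_dist_datum_eq[OF D(1) i z] U_def mult.assoc)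
qed

lemma prob_hartigan_dist_le:
  fixes \<tau> \<sigma> :: real and n i :: nat and z :: "nat \<Rightarrow> nat" and A B :: "nat set"
  defines "P \<equiv> hartigan_scale \<tau> \<sigma> n z i A" and "R \<equiv> hartigan_scale \<tau> \<sigma> n z i B"
  assumes \<tau>: "\<tau> > 0" and \<sigma>: "\<sigma> > 0" and i: "i \<in> {1..n}" and z: "\<forall>m\<in>{1..n}. z m \<in> {1,2}"
    and A: "A \<subseteq> {1..n}" "A \<noteq> {}" "i \<in> A \<Longrightarrow> card A \<ge> 2"
    and B: "B \<subseteq> {1..n}" "B \<noteq> {}" "i \<in> B \<Longrightarrow> card B \<ge> 2"
    and "R < P"
  shows "measure (model n d \<tau> \<sigma>)
           {\<omega> \<in> space (model n d \<tau> \<sigma>). hartigan_dist d (datum z \<omega>) i A \<le> hartigan_dist d (datum z \<omega>) i B}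
         \<le> (1 - ((P - R) / (P + R))\<^sup>2) powr (real d / 4)"
proof -
  interpret prob_space "model n d \<tau> \<sigma>" using \<tau> \<sigma> by (rule prob_space_model)
  show ?thesis
  proof (rule prob_le_of_scaled_chi_square_laplace)
    show "0 < R" "R < P"
      using \<sigma> \<open>R < P\<close> by (simp_all add: R_def hartigan_scale_pos)
    show "(\<lambda>\<omega>. hartigan_dist d (datum z \<omega>) i A) \<in> borel_measurable (model n d \<tau> \<sigma>)"
      "(\<lambda>\<omega>. hartigan_dist d (datum z \<omega>) i B) \<in> borel_measurable (model n d \<tau> \<sigma>)"
      using A B i z by (simp_all add: measurable_hartigan_dist)
    show "(\<integral>\<^sup>+\<omega>. ennreal (exp (- \<kappa> * hartigan_dist d (datum z \<omega>) i A)) \<partial>model n d \<tau> \<sigma>)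
        = ennreal ((1 / sqrt (1 + 2 * \<kappa> * P)) ^ d)" if "1 + 2 * \<kappa> * P > 0" for \<kappa>
      using that A i z \<tau> \<sigma> unfolding P_def by (intro nn_integral_exp_hartigan_dist) auto
    show "(\<integral>\<^sup>+\<omega>. ennreal (exp (- \<kappa> * hartigan_dist d (datum z \<omega>) i B)) \<partial>model n d \<tau> \<sigma>)
        = ennreal ((1 / sqrt (1 + 2 * \<kappa> * R)) ^ d)" if "1 + 2 * \<kappa> * R > 0" for \<kappa>
      using that B i z \<tau> \<sigma> unfolding R_def by (intro nn_integral_exp_hartigan_dist) auto
  qed
qed

lemma hartigan_scale_less:
  fixes \<tau> \<sigma> :: real and n i :: nat and z :: "nat \<Rightarrow> nat"
  defines "S \<equiv> true_class n z (z i)"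
  assumes "\<tau> \<noteq> 0"
    and A: "finite A" "card A \<ge> 2" "i \<in> A" and B: "finite B" "i \<notin> B"
    and less_1: "card (A \<inter> S) / card A < 1" and le: "card (A \<inter> S) / card A \<le> card (B \<inter> S) / card B"
  shows "hartigan_scale \<tau> \<sigma> n z i B < hartigan_scale \<tau> \<sigma> n z i A"
proof -
  define a where "a = 1 - real (card (A \<inter> S)) / card A"
  define b where "b = 1 - real (card (B \<inter> S)) / card B"
  have "card (B \<inter> S) \<le> card B" using B by (intro card_mono) auto
  then have "real (card (B \<inter> S)) / card B \<le> 1"
    by (cases "card B = 0") auto
  then have ab: "0 \<le> b" "b \<le> a" "0 < a" using le less_1 by (auto simp: a_def b_def)
  have "hartigan_weight i B * b\<^sup>2 \<le> hartigan_weight i B * a\<^sup>2"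
    using ab hartigan_weight_nonneg[of i B] by (intro mult_left_mono power_mono) auto
  also have "\<dots> < hartigan_weight i A * a\<^sup>2"
  proof (rule mult_strict_right_mono)
    have "hartigan_weight i B < 1"
      using B by (simp add: hartigan_weight_def)
    also have "1 < hartigan_weight i A"
      using A by (simp add: hartigan_weight_def field_simps)
    finally show "hartigan_weight i B < hartigan_weight i A" .
  qed (use ab in simp)
  finally have "hartigan_weight i B * b\<^sup>2 < hartigan_weight i A * a\<^sup>2" .
  then show ?thesis
    using \<open>\<tau> \<noteq> 0\<close> by (simp add: hartigan_scale_def S_def a_def b_def mult.assoc)
qed

lemma subset_true_class_if_Rfrac_ge_1:
  assumes "finite (C k)" and "Rfrac n z C l k \<ge> 1"
  shows "C k \<subseteq> true_class n z l"
proof -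
  have "card (C k) > 0"
    using assms(2) by (cases "card (C k) = 0") (auto simp: Rfrac_def)
  then have "card (C k) \<le> card (C k \<inter> true_class n z l)"
    using assms(2) by (simp add: Rfrac_def)
  moreover have "card (C k \<inter> true_class n z l) \<le> card (C k)"
    using assms(1) by (intro card_mono) auto
  ultimately have "C k \<inter> true_class n z l = C k"
    using assms(1) by (intro card_subset_eq) auto
  then show ?thesis by blast
qed

lemma partition_other:
  assumes "C 1 \<union> C 2 = A" "C 1 \<inter> C 2 = {}" "C 1 \<noteq> {}" "C 2 \<noteq> {}" and "j \<in> {1,2}"
  shows "C j \<union> C (other j) = A" "C j \<inter> C (other j) = {}" "C (other j) \<noteq> {}"
proof -
  have "C j \<union> C (other j) = C 1 \<union> C 2" "C j \<inter> C (other j) = C 1 \<inter> C 2" "C (other j) \<in> {C 1, C 2}"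
    using \<open>j \<in> {1,2}\<close> by (auto simp: other_def)
  then show "C j \<union> C (other j) = A" "C j \<inter> C (other j) = {}" "C (other j) \<noteq> {}"
    using assms(1-4) by auto
qed

lemma Rfrac_less_1:
  assumes classes: "true_class n z 1 \<noteq> {}" "true_class n z 2 \<noteq> {}" and l: "l \<in> {1,2}"
    and union: "C j \<union> C (other j) = {1..n}"
    and le: "Rfrac n z C l j \<le> Rfrac n z C l (other j)" "Rfrac n z C l (other j) \<le> 1"
  shows "Rfrac n z C l j < 1"
proof (rule ccontr)
  assume "\<not> Rfrac n z C l j < 1"
  then have ge_1: "Rfrac n z C l j \<ge> 1" "Rfrac n z C l (other j) \<ge> 1"
    using le by auto
  have "finite (C j \<union> C (other j))"
    unfolding union by simp
  then have "C j \<union> C (other j) \<subseteq> true_class n z l"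
    using ge_1 by (simp add: subset_true_class_if_Rfrac_ge_1)
  then have all: "{1..n} \<subseteq> true_class n z l"
    unfolding union .
  have "true_class n z (other l) \<noteq> {}"
    using classes l by (auto simp: other_def)
  then obtain m where "m \<in> {1..n}" "z m = other l"
    by (auto simp: true_class_def)
  moreover from all \<open>m \<in> {1..n}\<close> have "z m = l"
    by (auto simp: true_class_def)
  ultimately show False
    using l by (auto simp: other_def)
qed

lemma card_ge_2_if_Rfrac_less_1:
  assumes "finite (C j)" "i \<in> C j" "i \<in> true_class n z l" and "Rfrac n z C l j < 1"
  shows "card (C j) \<ge> 2"
proof (rule ccontr)
  assume "\<not> card (C j) \<ge> 2"
  moreover have "card (C j) \<noteq> 0"
    using assms(1,2) by auto
  ultimately have "card (C j) = 1"
    by linarith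
  then have "C j = {i}"
    using assms(2) by (auto simp: card_1_singleton_iff)
  then show False
    using assms(3,4) by (simp add: Rfrac_def)
qed

lemma rho_eq_hartigan_scale:
  fixes \<tau> \<sigma> :: real and n :: nat
  assumes "i \<in> C j" "i \<notin> C (other j)" "z i = l"
  defines "P \<equiv> hartigan_scale \<tau> \<sigma> n z i (C j)" and "R \<equiv> hartigan_scale \<tau> \<sigma> n z i (C (other j))"
  shows "rho \<tau> \<sigma> C (Rfrac n z C l j) (Rfrac n z C l (other j)) j = 1 - ((P - R) / (P + R))\<^sup>2"
proof -
  define a where "a = real (card (C j)) / (real (card (C j)) - 1) * (1 - Rfrac n z C l j)\<^sup>2"
  define b where "b = real (card (C (other j))) / (real (card (C (other j))) + 1)
                      * (1 - Rfrac n z C l (other j))\<^sup>2"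
  have "P = 2 * \<tau>\<^sup>2 * a + \<sigma>\<^sup>2" "R = 2 * \<tau>\<^sup>2 * b + \<sigma>\<^sup>2"
    using assms by (simp_all add: P_def R_def hartigan_scale_def hartigan_weight_def Rfrac_def a_def b_def)
  then have "(P - R) / (P + R) = (2 * (\<tau>\<^sup>2 * (a - b))) / (2 * (\<tau>\<^sup>2 * (a + b) + \<sigma>\<^sup>2))"
    by (simp add: algebra_simps)
  also have "\<dots> = (\<tau>\<^sup>2 * (a - b)) / (\<tau>\<^sup>2 * (a + b) + \<sigma>\<^sup>2)"
    by (rule mult_divide_mult_cancel_left) simp
  finally show ?thesis
    by (simp add: rho_def Let_def a_def b_def)
qed

theorem corollary3p10:
  fixes n d :: nat and \<tau> \<sigma> :: real and z :: "nat \<Rightarrow> nat" and C :: "nat \<Rightarrow> nat set"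
    and i l j :: nat
  assumes "n \<ge> 2" and "d \<ge> 1" and "\<tau> > 0" and "\<sigma> > 0"
    and "\<forall>i\<in>{1..n}. z i \<in> {1,2}"
    and "true_class n z 1 \<noteq> {}" and "true_class n z 2 \<noteq> {}"
    and "C 1 \<union> C 2 = {1..n}" and "C 1 \<inter> C 2 = {}"
    and "C 1 \<noteq> {}" and "C 2 \<noteq> {}"
    and "i \<in> {1..n}" and "l \<in> {1,2}" and "j \<in> {1,2}"
    and "i \<in> true_class n z l" and "i \<in> C j"
    and "0 < Rfrac n z C l j"
    and "Rfrac n z C l j \<le> Rfrac n z C l (other j)"
    and "Rfrac n z C l (other j) \<le> 1"
  shows "measure (model n d \<tau> \<sigma>)
           {\<omega> \<in> space (model n d \<tau> \<sigma>). hartigan_fixed_point d (datum z \<omega>) C}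
         \<le> rho \<tau> \<sigma> C (Rfrac n z C l j) (Rfrac n z C l (other j)) j powr (real d / 4)"
proof -
  note \<tau> = \<open>\<tau> > 0\<close> and \<sigma> = \<open>\<sigma> > 0\<close> and z = \<open>\<forall>i\<in>{1..n}. z i \<in> {1,2}\<close>
    and i = \<open>i \<in> {1..n}\<close> and ij = \<open>i \<in> C j\<close> and il = \<open>i \<in> true_class n z l\<close>
  note parts = partition_other[OF assms(8-11,14)]
  have clusters: "C j \<subseteq> {1..n}" "C (other j) \<subseteq> {1..n}" "i \<notin> C (other j)"
    using parts(1,2) ij by blast+
  then have finite: "finite (C j)" "finite (C (other j))"
    by (auto intro: finite_subset)
  have R_lt_1: "Rfrac n z C l j < 1"
    using assms(6,7,13) parts(1) assms(18,19) by (rule Rfrac_less_1)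
  have card: "card (C j) \<ge> 2"
    using finite(1) ij il R_lt_1 by (rule card_ge_2_if_Rfrac_less_1)
  have zi: "z i = l" using il by (simp add: true_class_def)
  have less: "hartigan_scale \<tau> \<sigma> n z i (C (other j)) < hartigan_scale \<tau> \<sigma> n z i (C j)"
    using \<tau> finite card ij clusters(3) R_lt_1 assms(18)
    by (intro hartigan_scale_less) (auto simp: Rfrac_def zi)
  interpret prob_space "model n d \<tau> \<sigma>" using \<tau> \<sigma> by (rule prob_space_model)
  have "measure (model n d \<tau> \<sigma>) {\<omega> \<in> space (model n d \<tau> \<sigma>). hartigan_fixed_point d (datum z \<omega>) C}
      \<le> prob {\<omega> \<in> space (model n d \<tau> \<sigma>).
               hartigan_dist d (datum z \<omega>) i (C j) \<le> hartigan_dist d (datum z \<omega>) i (C (other j))}"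
    using \<open>j \<in> {1,2}\<close> ij card measurable_hartigan_dist[OF clusters(1) i z]
      measurable_hartigan_dist[OF clusters(2) i z]
    by (intro finite_measure_mono) (auto simp: hartigan_fixed_point_def)
  also have "\<dots> \<le> rho \<tau> \<sigma> C (Rfrac n z C l j) (Rfrac n z C l (other j)) j powr (real d / 4)"
    unfolding rho_eq_hartigan_scale[where C = C and j = j and z = z and i = i, OF ij clusters(3) zi]
    using \<tau> \<sigma> i z clusters parts(3) card less ij by (intro prob_hartigan_dist_le) auto
  finally show ?thesis .
qed

end
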